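(* In the random order model, algorithm Random achieves an asymptotic approximation ratio of at most $3/4$ for one-sided bipartite matching.
   Context: One-sided bipartite matching: offline vertices are known in advance; online vertices arrive one at a time, each with its set of offline neighbours, and must be irrevocably matched to an unmatched neighbour or left unmatched; the goal is a maximum-size matching. Algorithm Random: when an online vertex arrives, if it has unmatched neighbours, match it to one of them chosen uniformly at random. Random order model (ROM): the adversary chooses the graph, and the arrival order of the online vertices is a uniformly random permutation. The asymptotic approximation ratio of $\mathbb{A}$ in ROM is $\liminf_{n}\inf_{I\in\mathcal{I}_n} \mathbb{E}[v(\mathbb{A},I(\sigma))]/v(I)$, where the expectation is over the uniformly random permutation $\sigma$ of the $n$ data items (and the algorithm's randomness), and $v(I)$ is the maximum matching size. *)

theory Defs
  imports "HOL-Probability.Probability"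
begin

text \<open>An instance with n online vertices (the data items) 0..<n; online vertex u has
  the finite set N u of offline neighbours (offline vertices are natural numbers).
  Only the values N u for u < n matter.\<close>

definition valid_instance :: "nat \<Rightarrow> (nat \<Rightarrow> nat set) \<Rightarrow> bool" where
  "valid_instance n N \<longleftrightarrow> (\<forall>u<n. finite (N u))"

definition is_matching :: "nat \<Rightarrow> (nat \<Rightarrow> nat set) \<Rightarrow> (nat \<times> nat) set \<Rightarrow> bool" where
  "is_matching n N M \<longleftrightarrow>
     (\<forall>(u, v)\<in>M. u < n \<and> v \<in> N u) \<and>
     (\<forall>(u, v)\<in>M. \<forall>(u', v')\<in>M. (u = u' \<or> v = v') \<longrightarrow> (u, v) = (u', v'))"

definition opt_matching :: "nat \<Rightarrow> (nat \<Rightarrow> nat set) \<Rightarrow> nat" where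
  "opt_matching n N = Max (card ` {M. is_matching n N M})"

text \<open>Algorithm Random on arrival sequence us, with set Mt of already matched offline
  vertices: distribution of the number of online vertices it matches.\<close>
fun random_alg :: "(nat \<Rightarrow> nat set) \<Rightarrow> nat list \<Rightarrow> nat set \<Rightarrow> nat pmf" where
  "random_alg N [] Mt = return_pmf 0"
| "random_alg N (u # us) Mt =
     (if N u - Mt = {} then random_alg N us Mt
      else pmf_of_set (N u - Mt) \<bind> (\<lambda>v. map_pmf Suc (random_alg N us (insert v Mt))))"

definition expected_random :: "nat \<Rightarrow> (nat \<Rightarrow> nat set) \<Rightarrow> real" where
  "expected_random n N =
     measure_pmf.expectation
       (pmf_of_set (permutations_of_set {..<n}) \<bind> (\<lambda>\<sigma>. random_alg N \<sigma> {})) real"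

text \<open>Asymptotic approximation ratio of Random in ROM; instances with v(I) = 0 are excluded
  (the ratio E/v(I) is undefined for them).\<close>
definition random_rom_ratio :: ereal where
  "random_rom_ratio =
     liminf (\<lambda>n. INF N \<in> {N. valid_instance n N \<and> opt_matching n N > 0}.
                  ereal (expected_random n N / real (opt_matching n N)))"

end

theory Submission
  imports Defs
begin

text \<open>The bad instance has p ~ n/2 online vertices x_i, each adjacent to all q = n - p
  shared offline vertices s_j and to a private offline vertex t_i, and q online vertices
  y_j adjacent to s_j only, so it has a perfect matching. An arriving x_i with c free
  shared neighbours takes a shared one with probability c/(c+1), and thereby blocks the
  corresponding y_j if y_j has not arrived yet. Conditioning on which pending vertex arrives
  first, induction on the set of pending arrivals bounds the expected number of further matches
  by a + c(b+1)/(a+b) when a of the x's and b of the y's are pending and c shared vertices are free.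
  Initially this is p + q(q+1)/n ~ 3n/4.\<close>

lemma set_pmf_random_alg_subset: "set_pmf (random_alg N us Mt) \<subseteq> {..length us}"
proof (induction us arbitrary: Mt)
  case (Cons u us)
  then show ?case
    by auto fastforce+
qed simp

definition random_order_alg :: "(nat \<Rightarrow> nat set) \<Rightarrow> nat set \<Rightarrow> nat set \<Rightarrow> nat pmf" where
  "random_order_alg N R Mt = pmf_of_set (permutations_of_set R) \<bind> (\<lambda>\<sigma>. random_alg N \<sigma> Mt)"

lemma finite_set_pmf_random_order_alg:
  assumes "finite R"
  shows "finite (set_pmf (random_order_alg N R Mt))"
proof -
  have "set_pmf (random_order_alg N R Mt) \<subseteq> {..card R}"
    using set_pmf_random_alg_subset assms
    by (fastforce simp: random_order_alg_def length_finite_permutations_of_set)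
  then show ?thesis
    using finite_subset by blast
qed

lemma random_order_alg_first_arrival:
  assumes "finite R" "R \<noteq> {}"
  shows "random_order_alg N R Mt = pmf_of_set R \<bind> (\<lambda>u.
           if N u - Mt = {} then random_order_alg N (R - {u}) Mt
           else pmf_of_set (N u - Mt) \<bind> (\<lambda>v. map_pmf Suc (random_order_alg N (R - {u}) (insert v Mt))))"
  unfolding random_order_alg_def random_permutation_of_set[OF assms]
  by (auto simp: bind_assoc_pmf bind_return_pmf map_bind_pmf
           intro!: bind_pmf_cong bind_commute_pmf)

definition expected_matching :: "(nat \<Rightarrow> nat set) \<Rightarrow> nat set \<Rightarrow> nat set \<Rightarrow> real" where
  "expected_matching N R Mt = measure_pmf.expectation (random_order_alg N R Mt) real"

lemma expected_random_eq_expected_matching: "expected_random n N = expected_matching N {..<n} {}"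
  by (simp add: expected_random_def expected_matching_def random_order_alg_def)

lemma expected_matching_empty [simp]: "expected_matching N {} Mt = 0"
  by (simp add: expected_matching_def random_order_alg_def pmf_of_set_singleton bind_return_pmf)

lemma expectation_map_pmf_Suc:
  assumes "finite (set_pmf p)"
  shows "measure_pmf.expectation (map_pmf Suc p) real = 1 + measure_pmf.expectation p real"
  using assms by (simp add: Bochner_Integration.integral_add integrable_measure_pmf_finite)

definition expected_matching_arriving_first ::
    "(nat \<Rightarrow> nat set) \<Rightarrow> nat set \<Rightarrow> nat set \<Rightarrow> nat \<Rightarrow> real" where
  "expected_matching_arriving_first N R Mt u =
     (if N u - Mt = {} then expected_matching N (R - {u}) Mt
      else (\<Sum>v\<in>N u - Mt. 1 + expected_matching N (R - {u}) (insert v Mt)) / card (N u - Mt))"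

lemma expected_matching_first_arrival:
  assumes "finite R" "R \<noteq> {}" "\<And>u. u \<in> R \<Longrightarrow> finite (N u)"
  shows "expected_matching N R Mt = (\<Sum>u\<in>R. expected_matching_arriving_first N R Mt u) / card R"
proof -
  have "measure_pmf.expectation (if N u - Mt = {} then random_order_alg N (R - {u}) Mt
          else pmf_of_set (N u - Mt) \<bind> (\<lambda>v. map_pmf Suc (random_order_alg N (R - {u}) (insert v Mt)))) real
        = expected_matching_arriving_first N R Mt u"
    if "u \<in> R" for u
    using assms that
    by (auto simp: expected_matching_arriving_first_def expected_matching_def pmf_expectation_bind_pmf_of_set
          finite_set_pmf_random_order_alg expectation_map_pmf_Suc divide_inverse_commute sum_distrib_left
          simp del: integral_map_pmf)
  with assms show ?thesis
    unfolding sum_divide_distrib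
    by (simp add: expected_matching_def random_order_alg_first_arrival pmf_expectation_bind_pmf_of_set
          finite_set_pmf_random_order_alg divide_inverse_commute)
qed

definition hard_bound :: "real \<Rightarrow> real \<Rightarrow> real \<Rightarrow> real" where
  "hard_bound a b c = a + c * (b + 1) / (a + b)"

text \<open>The left-hand side averages the bound over the first arrival: one of a x's (taking t_i or
  one of c free s_j), one of c y's whose s_j is free, or one of b - c y's whose s_j is taken.\<close>

lemma hard_bound_recursion:
  fixes a b c :: real
  assumes "0 \<le> a" "0 \<le> c" "c \<le> b" "1 \<le> a + b"
  shows "(a * ((c * (1 + hard_bound (a - 1) b (c - 1)) + 1 + hard_bound (a - 1) b c) / (c + 1))
            + c * (1 + hard_bound a (b - 1) (c - 1)) + (b - c) * hard_bound a (b - 1) c) / (a + b)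
         \<le> hard_bound a b c"
proof -
  define t where "t = inverse (a + b - 1)"
  have "t \<ge> 0"
    using assms by (simp add: t_def)
  have shift_left: "hard_bound (a - 1) b x = a - 1 + x * (b + 1) * t" for x
    by (simp add: hard_bound_def t_def divide_inverse algebra_simps)
  have shift_right: "hard_bound a (b - 1) x = a + x * b * t" for x
    by (simp add: hard_bound_def t_def divide_inverse algebra_simps)
  have "c + 1 \<noteq> 0"
    using assms by simp
  then have numerator: "a * ((c * (1 + hard_bound (a - 1) b (c - 1)) + 1 + hard_bound (a - 1) b c) / (c + 1))
      + c * (1 + hard_bound a (b - 1) (c - 1)) + (b - c) * hard_bound a (b - 1) c
    = a * (a + b) + c + c * (a * (c * (b + 1) / (c + 1)) * t + b * (b - 1) * t)"
    unfolding shift_left shift_right by (simp add: field_simps)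
  have "a * (c * (b + 1) / (c + 1)) * t + b * (b - 1) * t \<le> b"
  proof (cases "a + b = 1")
    case False
    have "c * (b + 1) / (c + 1) \<le> b"
      using assms by (simp add: field_simps)
    then have "a * (c * (b + 1) / (c + 1)) * t \<le> a * b * t"
      using assms \<open>t \<ge> 0\<close> by (intro mult_right_mono mult_left_mono) auto
    also have "a * b * t + b * (b - 1) * t = b * ((a + b - 1) * t)"
      by (simp add: algebra_simps)
    also have "\<dots> = b"
      using False by (simp add: t_def)
    finally show ?thesis by simp
  qed (use assms in \<open>simp add: t_def\<close>)
  then have "c * (a * (c * (b + 1) / (c + 1)) * t + b * (b - 1) * t) \<le> c * b"
    using assms(2) by (rule mult_left_mono)
  then have "a * (a + b) + c + c * (a * (c * (b + 1) / (c + 1)) * t + b * (b - 1) * t)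
      \<le> a * (a + b) + c * (b + 1)"
    by (simp add: distrib_left)
  then have "(a * (a + b) + c + c * (a * (c * (b + 1) / (c + 1)) * t + b * (b - 1) * t)) / (a + b)
      \<le> (a * (a + b) + c * (b + 1)) / (a + b)"
    by (rule divide_right_mono) (use assms in simp)
  also have "\<dots> = hard_bound a b c"
    using assms by (simp add: hard_bound_def add_divide_distrib)
  finally show ?thesis
    unfolding numerator .
qed

lemma card_filter_Diff_singleton:
  assumes "finite R" "u \<in> R"
  shows "card {w \<in> R - {u}. P w} = (if P u then card {w \<in> R. P w} - 1 else card {w \<in> R. P w})"
proof -
  have "{w \<in> R - {u}. P w} = {w \<in> R. P w} - {u}"
    by blast
  then show ?thesis
    using assms by simp
qed

text \<open>Online vertex i < p is x_i and p + j is y_j; offline vertex j < q is s_j and q + i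
  is t_i.\<close>

definition hard_instance :: "nat \<Rightarrow> nat \<Rightarrow> nat \<Rightarrow> nat set" where
  "hard_instance p q u = (if u < p then insert (q + u) {..<q} else if u < p + q then {u - p} else {})"

definition hard_invariant :: "nat \<Rightarrow> nat \<Rightarrow> nat set \<Rightarrow> nat set \<Rightarrow> bool" where
  "hard_invariant p q R Mt \<longleftrightarrow>
     R \<subseteq> {..<p + q} \<and> (\<forall>i\<in>R. i < p \<longrightarrow> q + i \<notin> Mt) \<and> (\<forall>j<q. j \<notin> Mt \<longrightarrow> p + j \<in> R)"

definition hard_potential :: "nat \<Rightarrow> nat \<Rightarrow> nat set \<Rightarrow> nat set \<Rightarrow> real" where
  "hard_potential p q R Mt = hard_bound (card {u \<in> R. u < p}) (card {u \<in> R. p \<le> u}) (card ({..<q} - Mt))"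

lemma hard_invariant_finite: "hard_invariant p q R Mt \<Longrightarrow> finite R"
  unfolding hard_invariant_def using finite_subset by blast

lemma hard_invariant_match:
  "hard_invariant p q R Mt \<Longrightarrow> u \<in> R \<Longrightarrow> v \<in> hard_instance p q u \<Longrightarrow>
     hard_invariant p q (R - {u}) (insert v Mt)"
  by (auto simp: hard_invariant_def hard_instance_def split: if_splits)

lemma hard_invariant_skip:
  "hard_invariant p q R Mt \<Longrightarrow> u \<in> R \<Longrightarrow> hard_instance p q u \<subseteq> Mt \<Longrightarrow>
     hard_invariant p q (R - {u}) Mt"
  by (auto simp: hard_invariant_def hard_instance_def split: if_splits)

lemma hard_invariant_free_right:
  assumes "hard_invariant p q R Mt"
  shows "{u \<in> R. p \<le> u \<and> u - p \<notin> Mt} = (+) p ` ({..<q} - Mt)"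
proof -
  have "u \<in> (+) p ` ({..<q} - Mt)" if "u \<in> R" "p \<le> u" "u - p \<notin> Mt" for u
    using that assms by (intro rev_image_eqI [of "u - p"]) (auto simp: hard_invariant_def)
  then show ?thesis
    using assms by (auto simp: hard_invariant_def)
qed

lemma hard_potential_Diff_singleton:
  fixes p q :: nat
  assumes "finite R" "u \<in> R"
  defines "a \<equiv> real (card {w \<in> R. w < p})" and "b \<equiv> real (card {w \<in> R. p \<le> w})"
  shows "hard_potential p q (R - {u}) Mt =
           (if u < p then hard_bound (a - 1) b (card ({..<q} - Mt))
            else hard_bound a (b - 1) (card ({..<q} - Mt)))"
proof -
  have "card {w \<in> R. w < p} \<ge> 1" if "u < p"
    using assms that by (auto simp: Suc_le_eq card_gt_0_iff)
  moreover have "card {w \<in> R. p \<le> w} \<ge> 1" if "\<not> u < p"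
    using assms that by (auto simp: Suc_le_eq card_gt_0_iff)
  ultimately show ?thesis
    unfolding hard_potential_def card_filter_Diff_singleton [OF assms(1,2)] a_def b_def
    by simp
qed

context
  fixes p q :: nat and R Mt :: "nat set"
  assumes invariant: "hard_invariant p q R Mt"
    and IH: "\<And>u Mt'. u \<in> R \<Longrightarrow> hard_invariant p q (R - {u}) Mt' \<Longrightarrow>
               expected_matching (hard_instance p q) (R - {u}) Mt' \<le> hard_potential p q (R - {u}) Mt'"
begin

definition pending_left :: real where "pending_left = card {u \<in> R. u < p}"

definition pending_right :: real where "pending_right = card {u \<in> R. p \<le> u}"

definition free_shared :: real where "free_shared = card ({..<q} - Mt)"

lemma finite_pending: "finite R"
  using invariant by (rule hard_invariant_finite)

lemma card_free_shared_remove: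
  assumes "v < q" "v \<notin> Mt"
  shows "card ({..<q} - insert v Mt) = free_shared - 1"
proof -
  have "{..<q} - insert v Mt = ({..<q} - Mt) - {v}"
    by auto
  moreover have "card ({..<q} - Mt) \<ge> 1"
    using assms by (auto simp: Suc_le_eq card_gt_0_iff)
  ultimately show ?thesis
    using assms by (simp add: free_shared_def)
qed

lemma arriving_first_left_le:
  assumes "u \<in> R" "u < p"
  shows "expected_matching_arriving_first (hard_instance p q) R Mt u \<le>
    (free_shared * (1 + hard_bound (pending_left - 1) pending_right (free_shared - 1))
       + 1 + hard_bound (pending_left - 1) pending_right free_shared) / (free_shared + 1)"
proof -
  define F where "F = {..<q} - Mt"
  have IH_left: "expected_matching (hard_instance p q) (R - {u}) (insert v Mt)
      \<le> hard_bound (pending_left - 1) pending_right (card ({..<q} - insert v Mt))"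
    if "v \<in> hard_instance p q u" for v
    using IH [OF assms(1) hard_invariant_match [OF invariant assms(1) that]]
      hard_potential_Diff_singleton [OF finite_pending assms(1)] assms(2)
    by (simp add: pending_left_def pending_right_def)
  have "q + u \<notin> Mt"
    using invariant assms unfolding hard_invariant_def by blast
  then have S: "hard_instance p q u - Mt = insert (q + u) F" and "q + u \<notin> F"
    using assms by (auto simp: hard_instance_def F_def)
  have "expected_matching_arriving_first (hard_instance p q) R Mt u
      = ((1 + expected_matching (hard_instance p q) (R - {u}) (insert (q + u) Mt))
         + (\<Sum>v\<in>F. 1 + expected_matching (hard_instance p q) (R - {u}) (insert v Mt))) / (free_shared + 1)"
    using \<open>q + u \<notin> F\<close> by (simp add: expected_matching_arriving_first_def S free_shared_def F_def)
  also have "\<dots> \<le> ((1 + hard_bound (pending_left - 1) pending_right free_shared)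
      + (\<Sum>v\<in>F. 1 + hard_bound (pending_left - 1) pending_right (free_shared - 1))) / (free_shared + 1)"
  proof (intro divide_right_mono add_mono sum_mono add_left_mono)
    have "{..<q} - insert (q + u) Mt = F"
      by (auto simp: F_def)
    then show "expected_matching (hard_instance p q) (R - {u}) (insert (q + u) Mt)
        \<le> hard_bound (pending_left - 1) pending_right free_shared"
      using IH_left [of "q + u"] assms(2) by (simp add: hard_instance_def free_shared_def F_def)
    show "expected_matching (hard_instance p q) (R - {u}) (insert v Mt)
        \<le> hard_bound (pending_left - 1) pending_right (free_shared - 1)" if "v \<in> F" for v
      using IH_left [of v] card_free_shared_remove [of v] that assms(2)
      by (simp add: hard_instance_def F_def)
  qed (simp_all add: free_shared_def)
  also have "\<dots> = (free_shared * (1 + hard_bound (pending_left - 1) pending_right (free_shared - 1))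
       + 1 + hard_bound (pending_left - 1) pending_right free_shared) / (free_shared + 1)"
    by (simp add: free_shared_def F_def algebra_simps)
  finally show ?thesis .
qed

lemma arriving_first_right_free_le:
  assumes "u \<in> R" "\<not> u < p" "u - p \<notin> Mt"
  shows "expected_matching_arriving_first (hard_instance p q) R Mt u
      \<le> 1 + hard_bound pending_left (pending_right - 1) (free_shared - 1)"
proof -
  have "u - p < q"
    using invariant assms unfolding hard_invariant_def by auto
  then have "hard_instance p q u = {u - p}"
    using assms by (simp add: hard_instance_def)
  then have "expected_matching_arriving_first (hard_instance p q) R Mt u
      = 1 + expected_matching (hard_instance p q) (R - {u}) (insert (u - p) Mt)"
    using assms by (simp add: expected_matching_arriving_first_def insert_Diff_if)
  also have "\<dots> \<le> 1 + hard_bound pending_left (pending_right - 1) (free_shared - 1)"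
    using IH [OF assms(1) hard_invariant_match [OF invariant assms(1), of "u - p"]]
      hard_potential_Diff_singleton [OF finite_pending assms(1)] card_free_shared_remove [of "u - p"]
      \<open>hard_instance p q u = {u - p}\<close> \<open>u - p < q\<close> assms
    by (simp add: pending_left_def pending_right_def)
  finally show ?thesis .
qed

lemma arriving_first_right_matched_le:
  assumes "u \<in> R" "\<not> u < p" "u - p \<in> Mt"
  shows "expected_matching_arriving_first (hard_instance p q) R Mt u
      \<le> hard_bound pending_left (pending_right - 1) free_shared"
proof -
  have "hard_instance p q u \<subseteq> Mt"
    using assms by (simp add: hard_instance_def)
  then have "expected_matching_arriving_first (hard_instance p q) R Mt u
      = expected_matching (hard_instance p q) (R - {u}) Mt"
    by (simp add: expected_matching_arriving_first_def)
  also have "\<dots> \<le> hard_bound pending_left (pending_right - 1) free_shared"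
    using IH [OF assms(1) hard_invariant_skip [OF invariant assms(1)]] \<open>hard_instance p q u \<subseteq> Mt\<close>
      hard_potential_Diff_singleton [OF finite_pending assms(1)] assms
    by (simp add: pending_left_def pending_right_def free_shared_def)
  finally show ?thesis .
qed

lemma card_pending: "real (card R) = pending_left + pending_right"
proof -
  have "card R = card ({u \<in> R. u < p} \<union> {u \<in> R. p \<le> u})"
    by (rule arg_cong [where f = card]) auto
  also have "\<dots> = card {u \<in> R. u < p} + card {u \<in> R. p \<le> u}"
    by (rule card_Un_disjoint) (use finite_pending in auto)
  finally show ?thesis
    by (simp add: pending_left_def pending_right_def)
qed

lemma card_pending_right_matched:
  "real (card {u \<in> R. p \<le> u \<and> u - p \<in> Mt}) = pending_right - free_shared"
proof -
  have "card {u \<in> R. p \<le> u \<and> u - p \<notin> Mt} = card ({..<q} - Mt)"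
    unfolding hard_invariant_free_right [OF invariant] by (simp add: card_image)
  moreover have "{u \<in> R. p \<le> u} = {u \<in> R. p \<le> u \<and> u - p \<notin> Mt} \<union> {u \<in> R. p \<le> u \<and> u - p \<in> Mt}"
    by blast
  ultimately show ?thesis
    using finite_pending by (simp add: pending_right_def free_shared_def card_Un_disjoint disjoint_iff)
qed

lemma expected_matching_hard_instance_step:
  assumes "R \<noteq> {}"
  shows "expected_matching (hard_instance p q) R Mt \<le> hard_potential p q R Mt"
proof -
  let ?a = pending_left and ?b = pending_right and ?c = free_shared
  define left where "left = (?c * (1 + hard_bound (?a - 1) ?b (?c - 1)) + 1 + hard_bound (?a - 1) ?b ?c) / (?c + 1)"
  define right_free where "right_free = 1 + hard_bound ?a (?b - 1) (?c - 1)"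
  define right_matched where "right_matched = hard_bound ?a (?b - 1) ?c"
  define bound where "bound u = of_bool (u < p) * left + of_bool (p \<le> u \<and> u - p \<notin> Mt) * right_free
      + of_bool (p \<le> u \<and> u - p \<in> Mt) * right_matched" for u
  have "?c \<le> ?b"
    using card_pending_right_matched by (metis diff_ge_0_iff_ge of_nat_0_le_iff)
  have "0 < card R"
    using finite_pending assms by (simp add: card_gt_0_iff)
  then have "1 \<le> ?a + ?b"
    using card_pending by linarith
  have "expected_matching (hard_instance p q) R Mt
      = (\<Sum>u\<in>R. expected_matching_arriving_first (hard_instance p q) R Mt u) / card R"
    using finite_pending assms by (rule expected_matching_first_arrival) (simp add: hard_instance_def)
  also have "\<dots> \<le> (\<Sum>u\<in>R. bound u) / card R"
    using arriving_first_left_le arriving_first_right_free_le arriving_first_right_matched_le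
    by (intro divide_right_mono sum_mono) (auto simp: bound_def left_def right_free_def right_matched_def)
  also have "(\<Sum>u\<in>R. bound u) = ?a * left + ?c * right_free + (?b - ?c) * right_matched"
    using finite_pending card_pending_right_matched
    by (simp add: bound_def sum.distrib pending_left_def free_shared_def Int_def
          hard_invariant_free_right [OF invariant] card_image)
  also have "\<dots> / card R \<le> hard_bound ?a ?b ?c"
    unfolding card_pending left_def right_free_def right_matched_def
    using \<open>?c \<le> ?b\<close> \<open>1 \<le> ?a + ?b\<close>
    by (intro hard_bound_recursion) (simp_all add: pending_left_def free_shared_def)
  finally show ?thesis
    by (simp add: hard_potential_def pending_left_def pending_right_def free_shared_def)
qed

end

lemma expected_matching_hard_instance_le:
  "hard_invariant p q R Mt \<Longrightarrow> expected_matching (hard_instance p q) R Mt \<le> hard_potential p q R Mt"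
proof (induction "card R" arbitrary: R Mt)
  case 0
  then have "R = {}"
    using hard_invariant_finite by auto
  then show ?case
    by (simp add: hard_potential_def hard_bound_def)
next
  case (Suc k)
  show ?case
  proof (rule expected_matching_hard_instance_step [OF Suc.prems])
    show "expected_matching (hard_instance p q) (R - {u}) Mt' \<le> hard_potential p q (R - {u}) Mt'"
      if "u \<in> R" "hard_invariant p q (R - {u}) Mt'" for u Mt'
      using Suc.hyps(1) [of "R - {u}" Mt'] Suc.hyps(2) that hard_invariant_finite [OF Suc.prems] by simp
    show "R \<noteq> {}"
      using Suc.hyps(2) by auto
  qed
qed

lemma card_le_opt_matching:
  assumes "valid_instance n N" "is_matching n N M"
  shows "card M \<le> opt_matching n N"
proof -
  have "{M. is_matching n N M} \<subseteq> Pow (SIGMA u:{..<n}. N u)"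
    by (auto simp: is_matching_def)
  moreover have "finite (SIGMA u:{..<n}. N u)"
    using assms(1) by (auto simp: valid_instance_def)
  ultimately have "finite {M. is_matching n N M}"
    by (rule finite_subset [OF _ finite_Pow_iff [THEN iffD2]])
  then show ?thesis
    using assms(2) by (auto simp: opt_matching_def)
qed

lemma valid_hard_instance: "valid_instance n (hard_instance p q)"
  by (simp add: valid_instance_def hard_instance_def)

lemma opt_matching_hard_instance: "p + q \<le> opt_matching (p + q) (hard_instance p q)"
proof -
  define M where "M = (\<lambda>i. (i, q + i)) ` {..<p} \<union> (\<lambda>j. (p + j, j)) ` {..<q}"
  have "is_matching (p + q) (hard_instance p q) M"
    by (auto simp: is_matching_def M_def hard_instance_def)
  moreover have "card M = p + q"
    unfolding M_def by (subst card_Un_disjoint) (auto simp: card_image inj_on_def)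
  ultimately show ?thesis
    using card_le_opt_matching [OF valid_hard_instance] by metis
qed

lemma hard_bound_balanced:
  fixes p q :: nat
  assumes "p \<le> q" "q \<le> p + 1"
  shows "hard_bound p q q \<le> 3 / 4 * (p + q) + 2"
proof -
  consider "q = p" | "q = p + 1"
    using assms by linarith
  then show ?thesis
  proof cases
    case 1
    then show ?thesis
      by (cases "p = 0") (simp_all add: hard_bound_def field_simps)
  next
    case 2
    have "real p * (2 * p + 1) + (p + 1) * (p + 2) \<le> (3 / 4 * (2 * p + 1) + 2) * (2 * p + 1)"
      by (simp add: algebra_simps)
    then show ?thesis
      using 2 by (simp add: hard_bound_def field_simps)
  qed
qed

lemma expected_random_hard_instance_le:
  fixes p q :: nat
  assumes "p \<le> q" "q \<le> p + 1"
  shows "expected_random (p + q) (hard_instance p q) \<le> 3 / 4 * (p + q) + 2"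
proof -
  have "hard_invariant p q {..<p + q} {}"
    by (auto simp: hard_invariant_def)
  then have "expected_random (p + q) (hard_instance p q) \<le> hard_potential p q {..<p + q} {}"
    unfolding expected_random_eq_expected_matching by (rule expected_matching_hard_instance_le)
  also have "\<dots> = hard_bound p q q"
  proof -
    have "{u \<in> {..<p + q}. u < p} = {..<p}" "{u \<in> {..<p + q}. p \<le> u} = {p..<p + q}"
      by auto
    then show ?thesis
      by (simp add: hard_potential_def)
  qed
  also have "\<dots> \<le> 3 / 4 * (p + q) + 2"
    using assms by (rule hard_bound_balanced)
  finally show ?thesis .
qed

lemma ratio_le_hard_instance:
  assumes "1 \<le> n"
  shows "(INF N \<in> {N. valid_instance n N \<and> opt_matching n N > 0}.
           ereal (expected_random n N / real (opt_matching n N))) \<le> ereal (3 / 4 + 2 / n)"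
proof -
  define p where "p = n div 2"
  define q where "q = n - n div 2"
  have "p + q = n" "p \<le> q" "q \<le> p + 1"
    by (simp_all add: p_def q_def)
  then have opt: "n \<le> opt_matching n (hard_instance p q)"
    using opt_matching_hard_instance [of p q] by simp
  have "expected_random n (hard_instance p q) / opt_matching n (hard_instance p q) \<le> (3 / 4 * n + 2) / n"
    using expected_random_hard_instance_le [OF \<open>p \<le> q\<close> \<open>q \<le> p + 1\<close>] \<open>p + q = n\<close> opt assms
    by (simp add: frac_le)
  also have "\<dots> = 3 / 4 + 2 / n"
    using assms by (simp add: field_simps)
  finally have "ereal (expected_random n (hard_instance p q) / opt_matching n (hard_instance p q))
      \<le> ereal (3 / 4 + 2 / n)"
    by simp
  moreover have "hard_instance p q \<in> {N. valid_instance n N \<and> opt_matching n N > 0}"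
    using opt assms valid_hard_instance by simp
  ultimately show ?thesis
    by (meson INF_lower order_trans)
qed

theorem theorem9:
  shows "random_rom_ratio \<le> ereal (3 / 4)"
proof -
  have "random_rom_ratio \<le> liminf (\<lambda>n. ereal (3 / 4 + 2 / real n))"
    unfolding random_rom_ratio_def
    by (rule Liminf_mono) (auto intro: ratio_le_hard_instance simp: eventually_sequentially)
  also have "\<dots> = ereal (3 / 4)"
  proof (rule lim_imp_Liminf)
    have "(\<lambda>n. 3 / 4 + 2 / real n) \<longlonglongrightarrow> 3 / 4 + 0"
      by (intro tendsto_intros)
    then show "(\<lambda>n. ereal (3 / 4 + 2 / real n)) \<longlonglongrightarrow> ereal (3 / 4)"
      by (intro tendsto_ereal) simp
  qed simp
  finally show ?thesis .
qed

end
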